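(* Let $\mathcal{C}$ be a regular category, $A, B$ objects, and $R_a$ a subobject of $A \times B$, $R_b$ a subobject of $B \times A$. Suppose that for every subobject $p$ of $A$ there is an arrow $c : \mathbf{1} \to A$ such that the following regular sequents are valid in $\mathcal{C}$ (with $x$ of sort $A$, $y$ of sort $B$): (A1) $R_a(c,y) \wedge R_b(y,x) \vdash_{\{x,y\}} p(x)$, (A2) $R_a(c,y) \wedge p(x) \vdash_{\{x,y\}} R_b(y,x)$, (A3) $\vdash \exists y.\, R_a(c,y)$. Then every natural transformation $\tau : \mathsf{Sub} \Rightarrow \mathsf{Sub}$ has a fixpoint, i.e. there is $s \in \mathsf{Sub}(\mathbf{1})$ with $\tau_{\mathbf{1}}(s) = s$.
   Context: A regular category is a well-powered category with finite limits and images stable under pullback, with terminal object $\mathbf{1}$. $\mathsf{Sub}(A)$ is the poset of subobjects of $A$; for $f : A \to B$, $f^*:\mathsf{Sub}(B)\to\mathsf{Sub}(A)$ is pullback, giving a functor $\mathsf{Sub}:\mathcal{C}^{op}\to\mathbf{Set}$; a natural transformation $\tau:\mathsf{Sub}\Rightarrow\mathsf{Sub}$ is a family $\tau_A:\mathsf{Sub}(A)\to\mathsf{Sub}(A)$ with $f^*\circ\tau_B=\tau_A\circ f^*$. Regular formulas are interpreted as subobjects: relation symbols by the given subobjects, substitution by pullback, conjunction by meet, $\exists$ along a projection $\pi$ by the left adjoint of $\pi^*$. A sequent $\phi\vdash_X\psi$ is valid if $[\![\phi]\!]\le[\![\psi]\!]$ in the subobject poset of the product of the sorts of $X$; $\vdash_X\psi$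 means $\top\vdash_X\psi$. *)

theory Defs
  imports Main
begin

text \<open>Small categories presented by objects, arrows, domain, codomain,
composition (cmp C g f = g after f) and identities.\<close>

record ('o, 'a) cat =
  Ob  :: "'o set"
  Ar  :: "'a set"
  dm  :: "'a \<Rightarrow> 'o"
  cd  :: "'a \<Rightarrow> 'o"
  cmp :: "'a \<Rightarrow> 'a \<Rightarrow> 'a"
  idt :: "'o \<Rightarrow> 'a"

definition hom :: "('o,'a) cat \<Rightarrow> 'o \<Rightarrow> 'o \<Rightarrow> 'a set" where
  "hom C X Y = {f \<in> Ar C. dm C f = X \<and> cd C f = Y}"

definition category :: "('o,'a) cat \<Rightarrow> bool" where
  "category C \<longleftrightarrow>
     (\<forall>f\<in>Ar C. dm C f \<in> Ob C \<and> cd C f \<in> Ob C) \<and>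
     (\<forall>X\<in>Ob C. idt C X \<in> hom C X X) \<and>
     (\<forall>f g. f \<in> Ar C \<and> g \<in> Ar C \<and> cd C f = dm C g \<longrightarrow>
            cmp C g f \<in> hom C (dm C f) (cd C g)) \<and>
     (\<forall>f\<in>Ar C. cmp C f (idt C (dm C f)) = f \<and> cmp C (idt C (cd C f)) f = f) \<and>
     (\<forall>f g h. f \<in> Ar C \<and> g \<in> Ar C \<and> h \<in> Ar C \<and> cd C f = dm C g \<and> cd C g = dm C h \<longrightarrow>
            cmp C h (cmp C g f) = cmp C (cmp C h g) f)"

definition mono :: "('o,'a) cat \<Rightarrow> 'a \<Rightarrow> bool" where
  "mono C m \<longleftrightarrow> m \<in> Ar C \<and>
     (\<forall>g h. g \<in> Ar C \<and> h \<in> Ar C \<and> dm C g = dm C h \<and> cd C g = dm C m \<and> cd C h = dm C m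
            \<and> cmp C m g = cmp C m h \<longrightarrow> g = h)"

text \<open>Subobjects of X are represented by monos with codomain X; two monos
represent the same subobject iff sub_eq holds.\<close>

definition Sub :: "('o,'a) cat \<Rightarrow> 'o \<Rightarrow> 'a set" where
  "Sub C X = {m. mono C m \<and> cd C m = X}"

definition sub_le :: "('o,'a) cat \<Rightarrow> 'a \<Rightarrow> 'a \<Rightarrow> bool" where
  "sub_le C m n \<longleftrightarrow> (\<exists>k \<in> hom C (dm C m) (dm C n). m = cmp C n k)"

definition sub_eq :: "('o,'a) cat \<Rightarrow> 'a \<Rightarrow> 'a \<Rightarrow> bool" where
  "sub_eq C m n \<longleftrightarrow> sub_le C m n \<and> sub_le C n m"

definition terminal :: "('o,'a) cat \<Rightarrow> 'o \<Rightarrow> bool" where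
  "terminal C T \<longleftrightarrow> T \<in> Ob C \<and> (\<forall>X\<in>Ob C. \<exists>!f. f \<in> hom C X T)"

definition is_pullback :: "('o,'a) cat \<Rightarrow> 'a \<Rightarrow> 'a \<Rightarrow> 'a \<Rightarrow> 'a \<Rightarrow> bool" where
  "is_pullback C f g p q \<longleftrightarrow>
     f \<in> Ar C \<and> g \<in> Ar C \<and> cd C f = cd C g \<and>
     p \<in> Ar C \<and> q \<in> Ar C \<and> dm C p = dm C q \<and> cd C p = dm C f \<and> cd C q = dm C g \<and>
     cmp C f p = cmp C g q \<and>
     (\<forall>p' q'. p' \<in> Ar C \<and> q' \<in> Ar C \<and> dm C p' = dm C q' \<and> cd C p' = dm C f \<and>
              cd C q' = dm C g \<and> cmp C f p' = cmp C g q' \<longrightarrow>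
        (\<exists>!h. h \<in> hom C (dm C p') (dm C p) \<and> cmp C p h = p' \<and> cmp C q h = q'))"

definition is_product :: "('o,'a) cat \<Rightarrow> 'o \<Rightarrow> 'o \<Rightarrow> 'o \<Rightarrow> 'a \<Rightarrow> 'a \<Rightarrow> bool" where
  "is_product C X Y P p1 p2 \<longleftrightarrow>
     P \<in> Ob C \<and> p1 \<in> hom C P X \<and> p2 \<in> hom C P Y \<and>
     (\<forall>Z f g. f \<in> hom C Z X \<and> g \<in> hom C Z Y \<longrightarrow>
        (\<exists>!h. h \<in> hom C Z P \<and> cmp C p1 h = f \<and> cmp C p2 h = g))"

definition is_pair :: "('o,'a) cat \<Rightarrow> 'a \<Rightarrow> 'a \<Rightarrow> 'a \<Rightarrow> 'a \<Rightarrow> 'a \<Rightarrow> bool" where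
  "is_pair C p1 p2 f g h \<longleftrightarrow>
     h \<in> Ar C \<and> dm C h = dm C f \<and> cd C h = dm C p1 \<and> cmp C p1 h = f \<and> cmp C p2 h = g"

definition is_image :: "('o,'a) cat \<Rightarrow> 'a \<Rightarrow> 'a \<Rightarrow> bool" where
  "is_image C f m \<longleftrightarrow>
     f \<in> Ar C \<and> mono C m \<and> cd C m = cd C f \<and>
     (\<exists>e \<in> hom C (dm C f) (dm C m). f = cmp C m e) \<and>
     (\<forall>n. mono C n \<and> cd C n = cd C f \<and> (\<exists>e \<in> hom C (dm C f) (dm C n). f = cmp C n e)
          \<longrightarrow> sub_le C m n)"

text \<open>Regular category: finite limits (terminal object and pullbacks),
images, stable under pullback. Well-poweredness is automatic in HOL
(subobject representatives form a set of arrows).\<close>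

definition regular_category :: "('o,'a) cat \<Rightarrow> bool" where
  "regular_category C \<longleftrightarrow>
     category C \<and> (\<exists>T. terminal C T) \<and>
     (\<forall>f g. f \<in> Ar C \<and> g \<in> Ar C \<and> cd C f = cd C g \<longrightarrow> (\<exists>p q. is_pullback C f g p q)) \<and>
     (\<forall>f \<in> Ar C. \<exists>m. is_image C f m) \<and>
     (\<forall>f m g f' g0 m' g1. is_image C f m \<and> is_pullback C g f f' g0 \<and> is_pullback C g m m' g1
          \<longrightarrow> is_image C f' m')"

definition pb :: "('o,'a) cat \<Rightarrow> 'a \<Rightarrow> 'a \<Rightarrow> 'a \<Rightarrow> bool" where
  "pb C f m n \<longleftrightarrow> (\<exists>q. is_pullback C f m n q)"

definition sub_meet :: "('o,'a) cat \<Rightarrow> 'a \<Rightarrow> 'a \<Rightarrow> 'a \<Rightarrow> bool" where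
  "sub_meet C m n k \<longleftrightarrow> (\<exists>p q. is_pullback C m n p q \<and> k = cmp C m p)"

text \<open>A natural transformation Sub => Sub, given on representatives:
maps Sub X to Sub X, respects equality of subobjects, and commutes with
pullback up to equality of subobjects.\<close>

definition nat_trans_Sub :: "('o,'a) cat \<Rightarrow> ('o \<Rightarrow> 'a \<Rightarrow> 'a) \<Rightarrow> bool" where
  "nat_trans_Sub C \<tau> \<longleftrightarrow>
     (\<forall>X\<in>Ob C. \<forall>m\<in>Sub C X. \<tau> X m \<in> Sub C X) \<and>
     (\<forall>X\<in>Ob C. \<forall>m n. m \<in> Sub C X \<and> n \<in> Sub C X \<and> sub_eq C m n \<longrightarrow> sub_eq C (\<tau> X m) (\<tau> X n)) \<and>
     (\<forall>X Y f m n n'. f \<in> hom C X Y \<and> m \<in> Sub C Y \<and> pb C f m n \<and> pb C f (\<tau> Y m) n'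
          \<longrightarrow> sub_eq C (\<tau> X n) n')"

end

theory Submission
  imports Defs
begin

text \<open>
A diagonal argument in the style of Lawvere's fixed point theorem. Let \<delta> \<le> A interpret
\<open>\<exists>y. Ra(x,y) \<and> Rb(y,x)\<close> and let the point c represent p = \<tau>_A(\<delta>) as in (A1)--(A3).
By naturality \<tau>_1(c^*\<delta>) = c^*p, so it suffices to show c^*\<delta> = c^*p. For every y with
Ra(c,y), (A1) and (A2) give Rb(y,c) \<longleftrightarrow> p(c). Hence \<delta>(c) implies p(c); conversely p(c)
implies \<delta>(c) with any witness y, and such witnesses exist locally by (A3).
\<close>

lemma hom_iff: "f \<in> hom C X Y \<longleftrightarrow> f \<in> Ar C \<and> dm C f = X \<and> cd C f = Y"
  by (simp add: hom_def)

lemma Sub_in_hom: "r \<in> Sub C X \<Longrightarrow> r \<in> hom C (dm C r) X"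
  by (simp add: Sub_def mono_def hom_iff)

locale small_cat =
  fixes C :: "('o, 'a) cat"
  assumes category: "category C"
begin

lemma in_hom: "f \<in> Ar C \<Longrightarrow> f \<in> hom C (dm C f) (cd C f)"
  by (simp add: hom_iff)

lemma hom_Ob: "f \<in> hom C X Y \<Longrightarrow> X \<in> Ob C \<and> Y \<in> Ob C"
  using category unfolding category_def hom_iff by auto

lemma comp_in_hom: "f \<in> hom C X Y \<Longrightarrow> g \<in> hom C Y Z \<Longrightarrow> cmp C g f \<in> hom C X Z"
  using category unfolding category_def by (auto simp: hom_iff)

lemma idt_in_hom: "X \<in> Ob C \<Longrightarrow> idt C X \<in> hom C X X"
  using category unfolding category_def by auto

lemma comp_assoc:
  "f \<in> hom C W X \<Longrightarrow> g \<in> hom C X Y \<Longrightarrow> h \<in> hom C Y Z \<Longrightarrow>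
     cmp C h (cmp C g f) = cmp C (cmp C h g) f"
  using category unfolding category_def by (auto simp: hom_iff)

lemma comp_idt_left: "f \<in> hom C X Y \<Longrightarrow> cmp C (idt C Y) f = f"
  using category unfolding category_def by (auto simp: hom_iff)

lemma comp_idt_right: "f \<in> hom C X Y \<Longrightarrow> cmp C f (idt C X) = f"
  using category unfolding category_def by (auto simp: hom_iff)

text \<open>\<open>sub_le C g m\<close> is used for arbitrary arrows g: the generalized element g lies in m.\<close>

lemma sub_leI: "m \<in> hom C Y X \<Longrightarrow> k \<in> hom C Z Y \<Longrightarrow> sub_le C (cmp C m k) m"
  unfolding sub_le_def using comp_in_hom by (auto simp: hom_iff)

lemma sub_leE:
  assumes "sub_le C g m" and "m \<in> hom C Y X"
  obtains k where "k \<in> hom C (dm C g) Y" "g = cmp C m k" "g \<in> hom C (dm C g) X"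
proof -
  obtain k where k: "k \<in> hom C (dm C g) (dm C m)" "g = cmp C m k"
    using assms(1) unfolding sub_le_def by blast
  moreover have "dm C m = Y"
    using assms(2) by (simp add: hom_iff)
  ultimately show thesis
    using that[of k] comp_in_hom[of k "dm C g" Y m X] assms(2) by simp
qed

lemma sub_le_refl: "m \<in> Ar C \<Longrightarrow> sub_le C m m"
  using sub_leI[OF in_hom idt_in_hom, of m] comp_idt_right[OF in_hom, of m]
    hom_Ob[OF in_hom, of m] by simp

lemma sub_le_trans:
  assumes "sub_le C g m" "sub_le C m n" "n \<in> Ar C"
  shows "sub_le C g n"
proof -
  obtain k' where k': "k' \<in> hom C (dm C m) (dm C n)" "m = cmp C n k'"
      "m \<in> hom C (dm C m) (cd C n)"
    using sub_leE[OF assms(2) in_hom[OF assms(3)]] by blast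
  obtain k where k: "k \<in> hom C (dm C g) (dm C m)" "g = cmp C m k"
    using sub_leE[OF assms(1) k'(3)] by blast
  have "g = cmp C n (cmp C k' k)"
    using k k' comp_assoc[OF k(1) k'(1) in_hom[OF assms(3)]] by simp
  then show ?thesis
    using sub_leI[OF in_hom[OF assms(3)] comp_in_hom[OF k(1) k'(1)]] by simp
qed

lemma sub_eq_trans:
  "sub_eq C g m \<Longrightarrow> sub_eq C m n \<Longrightarrow> g \<in> Ar C \<Longrightarrow> n \<in> Ar C \<Longrightarrow> sub_eq C g n"
  unfolding sub_eq_def using sub_le_trans by blast

lemma sub_le_comp_right:
  assumes "sub_le C g m" "m \<in> Ar C" "h \<in> hom C Z (dm C g)"
  shows "sub_le C (cmp C g h) m"
proof -
  obtain k where k: "k \<in> hom C (dm C g) (dm C m)" "g = cmp C m k"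
    using sub_leE[OF assms(1) in_hom[OF assms(2)]] by blast
  then have "cmp C g h = cmp C m (cmp C k h)"
    using comp_assoc[OF assms(3) k(1) in_hom[OF assms(2)]] by simp
  then show ?thesis
    using sub_leI[OF in_hom[OF assms(2)] comp_in_hom[OF assms(3) k(1)]] by simp
qed

lemma sub_le_comp_left:
  assumes "sub_le C g m" "m \<in> hom C Y X" "f \<in> hom C X W"
  shows "sub_le C (cmp C f g) (cmp C f m)"
proof -
  obtain k where k: "k \<in> hom C (dm C g) Y" "g = cmp C m k"
    using sub_leE[OF assms(1,2)] by blast
  then have "cmp C f g = cmp C (cmp C f m) k"
    using comp_assoc[OF k(1) assms(2,3)] by simp
  then show ?thesis
    using sub_leI[OF comp_in_hom[OF assms(2,3)] k(1)] by simp
qed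

lemma pullback_in_hom:
  assumes "is_pullback C f m n q"
  shows "n \<in> hom C (dm C n) (dm C f)" "q \<in> hom C (dm C n) (dm C m)"
    "f \<in> hom C (dm C f) (cd C f)" "m \<in> hom C (dm C m) (cd C f)"
  using assms unfolding is_pullback_def by (auto simp: hom_iff)

lemma pullback_commutes: "is_pullback C f m n q \<Longrightarrow> cmp C f n = cmp C m q"
  unfolding is_pullback_def by blast

lemma pullback_universal:
  assumes "is_pullback C f m n q" "g \<in> hom C Z (dm C f)" "h \<in> hom C Z (dm C m)"
    "cmp C f g = cmp C m h"
  shows "\<exists>!l. l \<in> hom C Z (dm C n) \<and> cmp C n l = g \<and> cmp C q l = h"
proof -
  have "g \<in> Ar C" "h \<in> Ar C" "dm C g = dm C h" "cd C g = dm C f" "cd C h = dm C m"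
    and Z: "dm C g = Z"
    using assms(2,3) by (auto simp: hom_iff)
  then have "\<exists>!l. l \<in> hom C (dm C g) (dm C n) \<and> cmp C n l = g \<and> cmp C q l = h"
    using assms(1,4) unfolding is_pullback_def by blast
  then show ?thesis
    unfolding Z .
qed

lemma pullback_lift:
  assumes "is_pullback C f m n q" "g \<in> hom C Z (dm C f)" "h \<in> hom C Z (dm C m)"
    "cmp C f g = cmp C m h"
  obtains l where "l \<in> hom C Z (dm C n)" "cmp C n l = g" "cmp C q l = h"
  using ex1_implies_ex[OF pullback_universal[OF assms]] that by blast

lemma pullback_lift_unique:
  assumes pb: "is_pullback C f m n q" and l: "l \<in> hom C Z (dm C n)" "l' \<in> hom C Z (dm C n)"
    and eq: "cmp C n l = cmp C n l'" "cmp C q l = cmp C q l'"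
  shows "l = l'"
proof -
  note sq = pullback_in_hom[OF pb]
  have "cmp C f (cmp C n l) = cmp C m (cmp C q l)"
    using comp_assoc[OF l(1) sq(1,3)] comp_assoc[OF l(1) sq(2,4)] pullback_commutes[OF pb]
    by simp
  then have "\<exists>\<^sub>\<le>\<^sub>1k. k \<in> hom C Z (dm C n) \<and> cmp C n k = cmp C n l \<and> cmp C q k = cmp C q l"
    using pullback_universal[OF pb comp_in_hom[OF l(1) sq(1)] comp_in_hom[OF l(1) sq(2)]]
    by (simp add: ex1_iff_ex_Uniq)
  then show ?thesis
    using l eq by (auto dest: Uniq_D)
qed

lemma monoD:
  assumes "mono C m" "g \<in> hom C Z (dm C m)" "h \<in> hom C Z (dm C m)" "cmp C m g = cmp C m h"
  shows "g = h"
proof -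
  have "\<forall>g h. g \<in> Ar C \<and> h \<in> Ar C \<and> dm C g = dm C h \<and> cd C g = dm C m \<and> cd C h = dm C m
          \<and> cmp C m g = cmp C m h \<longrightarrow> g = h"
    using assms(1) unfolding mono_def by (rule conjunct2)
  then show ?thesis
    using assms(2-4) unfolding hom_iff by simp
qed

lemma mono_pullback:
  assumes pb: "is_pullback C f m n q" and "mono C m"
  shows "mono C n"
  unfolding mono_def
proof (intro conjI allI impI)
  note sq = pullback_in_hom[OF pb]
  show "n \<in> Ar C"
    using sq by (simp add: hom_iff)
  fix g h
  assume "g \<in> Ar C \<and> h \<in> Ar C \<and> dm C g = dm C h \<and> cd C g = dm C n \<and> cd C h = dm C n
    \<and> cmp C n g = cmp C n h"
  then have g: "g \<in> hom C (dm C g) (dm C n)" and h: "h \<in> hom C (dm C g) (dm C n)"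
    and ng: "cmp C n g = cmp C n h"
    by (auto simp: hom_iff)
  have "cmp C m (cmp C q x) = cmp C f (cmp C n x)" if "x \<in> hom C (dm C g) (dm C n)" for x
    using comp_assoc[OF that sq(1,3)] comp_assoc[OF that sq(2,4)] pullback_commutes[OF pb]
    by simp
  then have "cmp C m (cmp C q g) = cmp C m (cmp C q h)"
    using g h ng by simp
  then have "cmp C q g = cmp C q h"
    using monoD[OF assms(2) comp_in_hom[OF g sq(2)] comp_in_hom[OF h sq(2)]] by blast
  then show "g = h"
    using pullback_lift_unique[OF pb g h ng] by blast
qed

lemma sub_le_pullback_iff:
  assumes pb: "is_pullback C f m n q" and "f \<in> hom C X Y" "g \<in> hom C Z X"
  shows "sub_le C g n \<longleftrightarrow> sub_le C (cmp C f g) m"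
proof -
  have g: "g \<in> hom C Z (dm C f)"
    using assms(2,3) by (simp add: hom_iff)
  show ?thesis
  proof
  note sq = pullback_in_hom[OF pb]
  assume "sub_le C g n"
  then obtain k where k: "k \<in> hom C (dm C g) (dm C n)" "g = cmp C n k"
    using sub_leE[OF _ sq(1)] by blast
  then have "cmp C f g = cmp C m (cmp C q k)"
    using comp_assoc[OF k(1) sq(1,3)] comp_assoc[OF k(1) sq(2,4)] pullback_commutes[OF pb]
    by simp
  then show "sub_le C (cmp C f g) m"
    using sub_leI[OF sq(4) comp_in_hom[OF k(1) sq(2)]] by simp
next
  note sq = pullback_in_hom[OF pb]
  assume "sub_le C (cmp C f g) m"
  then obtain h where "h \<in> hom C (dm C (cmp C f g)) (dm C m)" "cmp C f g = cmp C m h"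
    using sub_leE[OF _ sq(4)] by blast
  moreover have "dm C (cmp C f g) = Z"
    using comp_in_hom[OF g sq(3)] by (simp add: hom_iff)
  ultimately obtain l where "l \<in> hom C Z (dm C n)" "cmp C n l = g"
    using pullback_lift[OF pb g] by auto
  then show "sub_le C g n"
    using sub_leI[OF sq(1)] by blast
qed
qed

lemma sub_le_meet_iff:
  assumes pb: "is_pullback C m n p q"
  shows "sub_le C g (cmp C m p) \<longleftrightarrow> sub_le C g m \<and> sub_le C g n"
proof
  note sq = pullback_in_hom[OF pb]
  have mp: "cmp C m p \<in> hom C (dm C p) (cd C m)"
    using comp_in_hom[OF sq(1,3)] .
  assume "sub_le C g (cmp C m p)"
  then obtain k where k: "k \<in> hom C (dm C g) (dm C p)" "g = cmp C (cmp C m p) k"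
    using sub_leE[OF _ mp] by blast
  then have "g = cmp C m (cmp C p k)" "g = cmp C n (cmp C q k)"
    using comp_assoc[OF k(1) sq(1,3)] comp_assoc[OF k(1) sq(2,4)] pullback_commutes[OF pb]
    by simp_all
  then show "sub_le C g m \<and> sub_le C g n"
    using sub_leI[OF sq(3) comp_in_hom[OF k(1) sq(1)]] sub_leI[OF sq(4) comp_in_hom[OF k(1) sq(2)]]
    by simp
next
  note sq = pullback_in_hom[OF pb]
  assume "sub_le C g m \<and> sub_le C g n"
  then obtain h1 h2 where h: "h1 \<in> hom C (dm C g) (dm C m)" "g = cmp C m h1"
    "h2 \<in> hom C (dm C g) (dm C n)" "g = cmp C n h2"
    using sub_leE[OF _ sq(3)] sub_leE[OF _ sq(4)] by (elim conjE) metis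
  then obtain l where l: "l \<in> hom C (dm C g) (dm C p)" "cmp C p l = h1"
    using pullback_lift[OF pb h(1,3)] by metis
  then have "g = cmp C (cmp C m p) l"
    using h comp_assoc[OF l(1) sq(1,3)] by simp
  then show "sub_le C g (cmp C m p)"
    using sub_leI[OF comp_in_hom[OF sq(1,3)] l(1)] by simp
qed

lemma product_pair:
  assumes "is_product C X Y P p1 p2" "f \<in> hom C Z X" "g \<in> hom C Z Y"
  obtains h where "h \<in> hom C Z P" "cmp C p1 h = f" "cmp C p2 h = g"
  using assms unfolding is_product_def by blast

lemma product_eqI:
  assumes prod: "is_product C X Y P p1 p2" and h: "h \<in> hom C Z P" "h' \<in> hom C Z P"
    and eq: "cmp C p1 h = cmp C p1 h'" "cmp C p2 h = cmp C p2 h'"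
  shows "h = h'"
proof -
  have p: "p1 \<in> hom C P X" "p2 \<in> hom C P Y"
    using prod unfolding is_product_def by blast+
  have "\<exists>\<^sub>\<le>\<^sub>1k. k \<in> hom C Z P \<and> cmp C p1 k = cmp C p1 h \<and> cmp C p2 k = cmp C p2 h"
    using prod comp_in_hom[OF h(1) p(1)] comp_in_hom[OF h(1) p(2)]
    unfolding is_product_def ex1_iff_ex_Uniq by blast
  then show ?thesis
    using h eq by (auto dest: Uniq_D)
qed

lemma terminal_arrow:
  assumes "terminal C T" "X \<in> Ob C"
  obtains t where "t \<in> hom C X T"
  using assms unfolding terminal_def by blast

lemma terminal_arrow_unique:
  assumes "terminal C T" "t \<in> hom C X T" "t' \<in> hom C X T"
  shows "t = t'"
  using assms hom_Ob[OF assms(2)] unfolding terminal_def by blast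

lemma image_sub_le: "is_image C f m \<Longrightarrow> sub_le C f m"
  unfolding is_image_def sub_le_def by blast

lemma image_least:
  "is_image C f m \<Longrightarrow> mono C n \<Longrightarrow> cd C n = cd C f \<Longrightarrow> sub_le C f n \<Longrightarrow> sub_le C m n"
  unfolding is_image_def sub_le_def by blast

lemma pair_point_comp_eq:
  assumes prod: "is_product C X Y P p1 p2" and T: "terminal C T"
    and c: "c \<in> hom C T X" and t: "t \<in> hom C P P" "bang \<in> hom C P T"
    and t_pair: "cmp C p1 t = cmp C c bang" "cmp C p2 t = p2"
    and g: "g \<in> hom C Z P" "z \<in> hom C Z T" "cmp C p1 g = cmp C c z"
  shows "cmp C t g = g"
proof (rule product_eqI[OF prod comp_in_hom[OF g(1) t(1)] g(1)])
  have p: "p1 \<in> hom C P X" "p2 \<in> hom C P Y"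
    using prod unfolding is_product_def by blast+
  have "cmp C bang g = z"
    using terminal_arrow_unique[OF T comp_in_hom[OF g(1) t(2)] g(2)] .
  then show "cmp C p1 (cmp C t g) = cmp C p1 g"
    using comp_assoc[OF g(1) t(1) p(1)] comp_assoc[OF g(1) t(2) c] t_pair(1) g(3) by simp
  show "cmp C p2 (cmp C t g) = cmp C p2 g"
    using comp_assoc[OF g(1) t(1) p(2)] t_pair(2) by simp
qed

end

locale regular_cat = small_cat +
  assumes regular: "regular_category C"
begin

lemma pullback_exists:
  assumes "f \<in> hom C X Z" "g \<in> hom C Y Z"
  obtains p q where "is_pullback C f g p q"
  using assms regular unfolding regular_category_def hom_iff by metis

lemma image_exists:
  assumes "f \<in> Ar C"
  obtains m where "is_image C f m"
  using assms regular unfolding regular_category_def by blast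

lemma image_pullback:
  "is_image C f m \<Longrightarrow> is_pullback C g f f' g' \<Longrightarrow> is_pullback C g m m' g'' \<Longrightarrow>
     is_image C f' m'"
  using regular unfolding regular_category_def by blast

lemma sub_le_of_cover:
  assumes im: "is_image C f m" and top: "sub_le C (idt C (cd C f)) m"
    and pb: "is_pullback C n f f' g'"
    and s: "mono C s" "cd C s = cd C n" and le: "sub_le C (cmp C n f') s"
  shows "sub_le C n s"
proof -
  note sq = pullback_in_hom[OF pb]
  have cdn: "cd C n = cd C f"
    using pb unfolding is_pullback_def by blast
  have m: "mono C m" "m \<in> hom C (dm C m) (cd C n)"
    using im cdn unfolding is_image_def by (auto simp: hom_iff mono_def)
  have s_hom: "s \<in> hom C (dm C s) (cd C n)"
    using s by (simp add: hom_iff mono_def)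
  obtain w w' where pbw: "is_pullback C n s w w'"
    using pullback_exists[OF sq(3) s_hom] by metis
  obtain m' m'' where pbm: "is_pullback C n m m' m''"
    using pullback_exists[OF sq(3) m(2)] by metis
  have w: "mono C w" "w \<in> hom C (dm C w) (dm C n)"
    using mono_pullback[OF pbw s(1)] pullback_in_hom[OF pbw] by simp_all
  have "sub_le C f' w"
    using sub_le_pullback_iff[OF pbw sq(3) sq(1)] le by simp
  then have m'w: "sub_le C m' w"
    using image_least[OF image_pullback[OF im pb pbm] w(1)] w(2) sq(1) by (simp add: hom_iff)
  have idn: "idt C (dm C n) \<in> hom C (dm C n) (dm C n)"
    using idt_in_hom hom_Ob[OF sq(3)] by blast
  have "sub_le C (cmp C (idt C (cd C n)) n) m"
    using sub_le_comp_right[OF top _ ] m(2) sq(3) cdn idt_in_hom[of "cd C n"] hom_Ob[OF sq(3)]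
    by (simp add: hom_iff)
  then have "sub_le C (cmp C n (idt C (dm C n))) m"
    using comp_idt_left[OF sq(3)] comp_idt_right[OF sq(3)] by simp
  then have "sub_le C (idt C (dm C n)) m'"
    using sub_le_pullback_iff[OF pbm sq(3) idn] by simp
  then have "sub_le C (idt C (dm C n)) w"
    using sub_le_trans[OF _ m'w] w(2) by (simp add: hom_iff)
  then show ?thesis
    using sub_le_pullback_iff[OF pbw sq(3) idn] comp_idt_right[OF sq(3)] by simp
qed

end

locale relation_pair = regular_cat +
  fixes T A B PAB PBA :: 'o and a1 b1 b2 a2 Ra Rb swap :: 'a
  assumes terminal: "terminal C T"
    and prodAB: "is_product C A B PAB a1 b1"
    and prodBA: "is_product C B A PBA b2 a2"
    and Ra: "Ra \<in> Sub C PAB" and Rb: "Rb \<in> Sub C PBA"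
    and swap: "is_pair C b2 a2 b1 a1 swap"
begin

text \<open>
\<open>represents c p\<close> is (A1) \<and> (A2) and \<open>total_at c\<close> is (A3) exactly as in the hypothesis of
the theorem: \<open>t1 = \<langle>c \<circ> !, b1\<rangle>\<close>, the swap \<open>t2\<close> and \<open>a1\<close> pull Ra, Rb, p back to
Ra(c,y), Rb(y,x), p(x) in context {x,y}, and \<open>\<exists>y. Ra(c,y)\<close> is the image of
\<open>! \<circ> u^*Ra\<close> for \<open>u = \<langle>c \<circ> !, id\<rangle>\<close>.
\<close>

definition represents :: "'a \<Rightarrow> 'a \<Rightarrow> bool" where
  "represents c p \<longleftrightarrow>
     (\<forall>bang t1 t2. bang \<in> hom C PAB T \<and> is_pair C a1 b1 (cmp C c bang) b1 t1
                    \<and> is_pair C b2 a2 b1 a1 t2 \<longrightarrow>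
        (\<forall>ra rb pp. pb C t1 Ra ra \<and> pb C t2 Rb rb \<and> pb C a1 p pp \<longrightarrow>
           (\<forall>m1. sub_meet C ra rb m1 \<longrightarrow> sub_le C m1 pp) \<and>
           (\<forall>m2. sub_meet C ra pp m2 \<longrightarrow> sub_le C m2 rb)))"

definition total_at :: "'a \<Rightarrow> bool" where
  "total_at c \<longleftrightarrow>
     (\<forall>bangB u s m. bangB \<in> hom C B T \<and> is_pair C a1 b1 (cmp C c bangB) (idt C B) u
                      \<and> pb C u Ra s \<and> is_image C (cmp C bangB s) m \<longrightarrow>
        sub_le C (idt C T) m)"

lemma projections_in_hom:
  "a1 \<in> hom C PAB A" "b1 \<in> hom C PAB B" "b2 \<in> hom C PBA B" "a2 \<in> hom C PBA A"
  using prodAB prodBA unfolding is_product_def by blast+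

lemma swap_in_hom: "swap \<in> hom C PAB PBA"
  using swap projections_in_hom unfolding is_pair_def by (simp add: hom_iff)

lemma point_fiber_exists:
  assumes c: "c \<in> hom C T A"
  obtains bang t1 ra ra' where "bang \<in> hom C PAB T" "is_pair C a1 b1 (cmp C c bang) b1 t1"
    "is_pullback C t1 Ra ra ra'" "ra \<in> hom C (dm C ra) PAB"
    "\<And>Z g z. g \<in> hom C Z PAB \<Longrightarrow> z \<in> hom C Z T \<Longrightarrow> cmp C a1 g = cmp C c z \<Longrightarrow>
       sub_le C g Ra \<Longrightarrow> sub_le C g ra"
proof -
  note proj = projections_in_hom
  obtain bang where bang: "bang \<in> hom C PAB T"
    using terminal_arrow[OF terminal] hom_Ob[OF proj(1)] by blast
  obtain t1 where t1: "t1 \<in> hom C PAB PAB" "cmp C a1 t1 = cmp C c bang" "cmp C b1 t1 = b1"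
    using product_pair[OF prodAB comp_in_hom[OF bang c] proj(2)] by blast
  have "is_pair C a1 b1 (cmp C c bang) b1 t1"
    using t1 comp_in_hom[OF bang c] proj unfolding is_pair_def by (simp add: hom_iff)
  moreover obtain ra ra' where pb_ra: "is_pullback C t1 Ra ra ra'"
    using pullback_exists[OF t1(1) Sub_in_hom[OF Ra]] by blast
  moreover have "ra \<in> hom C (dm C ra) PAB"
    using pullback_in_hom(1)[OF pb_ra] t1(1) by (simp add: hom_iff)
  moreover have "sub_le C g ra"
    if g: "g \<in> hom C Z PAB" "z \<in> hom C Z T" "cmp C a1 g = cmp C c z" and "sub_le C g Ra"
    for Z g z
  proof -
    have "cmp C t1 g = g"
      using pair_point_comp_eq[OF prodAB terminal c t1(1) bang t1(2,3) g] .
    then show ?thesis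
      using sub_le_pullback_iff[OF pb_ra t1(1) g(1)] \<open>sub_le C g Ra\<close> by simp
  qed
  ultimately show thesis
    using that bang by blast
qed

lemma represents_iff:
  assumes rep: "represents c p" and c: "c \<in> hom C T A" and p: "p \<in> Sub C A"
    and g: "g \<in> hom C Z PAB" "z \<in> hom C Z T" "cmp C a1 g = cmp C c z"
    and gRa: "sub_le C g Ra"
  shows "sub_le C (cmp C swap g) Rb \<longleftrightarrow> sub_le C (cmp C a1 g) p"
proof -
  obtain bang t1 ra ra' where t1: "bang \<in> hom C PAB T" "is_pair C a1 b1 (cmp C c bang) b1 t1"
    and pb_ra: "is_pullback C t1 Ra ra ra'" and ra: "ra \<in> hom C (dm C ra) PAB"
    and g_ra: "sub_le C g ra"
    using point_fiber_exists[OF c] g gRa by metis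
  obtain rb rb' where pb_rb: "is_pullback C swap Rb rb rb'"
    using pullback_exists[OF swap_in_hom Sub_in_hom[OF Rb]] by blast
  obtain pp pp' where pb_pp: "is_pullback C a1 p pp pp'"
    using pullback_exists[OF projections_in_hom(1) Sub_in_hom[OF p]] by blast
  have rb: "rb \<in> hom C (dm C rb) PAB" and pp: "pp \<in> hom C (dm C pp) PAB"
    using pullback_in_hom(1)[OF pb_rb] pullback_in_hom(1)[OF pb_pp]
      swap_in_hom projections_in_hom(1) by (simp_all add: hom_iff)
  obtain m1 m1' where meet1: "is_pullback C ra rb m1 m1'"
    using pullback_exists[OF ra rb] by blast
  obtain m2 m2' where meet2: "is_pullback C ra pp m2 m2'"
    using pullback_exists[OF ra pp] by blast
  have A12: "sub_le C (cmp C ra m1) pp" "sub_le C (cmp C ra m2) rb"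
    using rep t1 swap pb_ra pb_rb pb_pp meet1 meet2
    unfolding represents_def pb_def sub_meet_def by blast+
  have iff_rb: "sub_le C (cmp C swap g) Rb \<longleftrightarrow> sub_le C g rb"
    using sub_le_pullback_iff[OF pb_rb swap_in_hom g(1)] by simp
  have iff_pp: "sub_le C (cmp C a1 g) p \<longleftrightarrow> sub_le C g pp"
    using sub_le_pullback_iff[OF pb_pp projections_in_hom(1) g(1)] by simp
  show ?thesis
  proof
    assume "sub_le C (cmp C swap g) Rb"
    then have "sub_le C g (cmp C ra m1)"
      using sub_le_meet_iff[OF meet1] g_ra iff_rb by simp
    then show "sub_le C (cmp C a1 g) p"
      using sub_le_trans[OF _ A12(1)] pp iff_pp by (simp add: hom_iff)
  next
    assume "sub_le C (cmp C a1 g) p"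
    then have "sub_le C g (cmp C ra m2)"
      using sub_le_meet_iff[OF meet2] g_ra iff_pp by simp
    then show "sub_le C (cmp C swap g) Rb"
      using sub_le_trans[OF _ A12(2)] rb iff_rb by (simp add: hom_iff)
  qed
qed

lemma total_at_cover:
  assumes tot: "total_at c" and c: "c \<in> hom C T A"
  obtains f m e where "is_image C f m" "f \<in> hom C (dm C f) T" "sub_le C (idt C T) m"
    "e \<in> hom C (dm C f) PAB" "sub_le C e Ra" "cmp C a1 e = cmp C c f"
proof -
  note proj = projections_in_hom
  have B: "B \<in> Ob C"
    using hom_Ob[OF proj(2)] by blast
  obtain bang where bang: "bang \<in> hom C B T"
    using terminal_arrow[OF terminal B] by blast
  obtain u where u: "u \<in> hom C B PAB" "cmp C a1 u = cmp C c bang" "cmp C b1 u = idt C B"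
    using product_pair[OF prodAB comp_in_hom[OF bang c] idt_in_hom[OF B]] by blast
  have "is_pair C a1 b1 (cmp C c bang) (idt C B) u"
    using u comp_in_hom[OF bang c] proj unfolding is_pair_def by (simp add: hom_iff)
  obtain s q where pb_s: "is_pullback C u Ra s q"
    using pullback_exists[OF u(1) Sub_in_hom[OF Ra]] by blast
  note sq = pullback_in_hom[OF pb_s]
  have s: "s \<in> hom C (dm C s) B"
    using sq(1) u(1) by (simp add: hom_iff)
  obtain m where im: "is_image C (cmp C bang s) m"
    using image_exists comp_in_hom[OF s bang] by (auto simp: hom_iff)
  have "sub_le C (idt C T) m"
    using tot bang \<open>is_pair C a1 b1 (cmp C c bang) (idt C B) u\<close> pb_s im
    unfolding total_at_def pb_def by blast
  moreover have "sub_le C (cmp C u s) Ra"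
    using sub_leI[OF Sub_in_hom[OF Ra]] sq(2) pullback_commutes[OF pb_s] by (simp add: hom_iff)
  moreover have "cmp C a1 (cmp C u s) = cmp C c (cmp C bang s)"
    using comp_assoc[OF s u(1) proj(1)] comp_assoc[OF s bang c] u(2) by simp
  moreover have "dm C (cmp C bang s) = dm C s"
    using comp_in_hom[OF s bang] by (simp add: hom_iff)
  ultimately show thesis
    using that[OF im] comp_in_hom[OF s bang] comp_in_hom[OF s u(1)] by simp
qed

lemma diagonal_exists:
  obtains k \<delta> where "k \<in> hom C (dm C k) PAB"
    "\<And>g. sub_le C g k \<longleftrightarrow> sub_le C g Ra \<and> sub_le C (cmp C swap g) Rb"
    "is_image C (cmp C a1 k) \<delta>" "\<delta> \<in> Sub C A"
proof -
  obtain rb rb' where pb_rb: "is_pullback C swap Rb rb rb'"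
    using pullback_exists[OF swap_in_hom Sub_in_hom[OF Rb]] by blast
  have rb: "rb \<in> hom C (dm C rb) PAB"
    using pullback_in_hom(1)[OF pb_rb] swap_in_hom by (simp add: hom_iff)
  obtain kp kq where meet: "is_pullback C Ra rb kp kq"
    using pullback_exists[OF Sub_in_hom[OF Ra] rb] by blast
  define k where "k = cmp C Ra kp"
  have k: "k \<in> hom C (dm C k) PAB"
    using comp_in_hom[OF pullback_in_hom(1)[OF meet] Sub_in_hom[OF Ra]]
    unfolding k_def by (simp add: hom_iff)
  have "sub_le C g k \<longleftrightarrow> sub_le C g Ra \<and> sub_le C (cmp C swap g) Rb" for g
  proof -
    have "sub_le C g Ra \<Longrightarrow> g \<in> hom C (dm C g) PAB"
      using sub_leE[OF _ Sub_in_hom[OF Ra]] by blast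
    then show ?thesis
      using sub_le_meet_iff[OF meet] sub_le_pullback_iff[OF pb_rb swap_in_hom]
      unfolding k_def by blast
  qed
  moreover obtain \<delta> where im: "is_image C (cmp C a1 k) \<delta>"
    using image_exists comp_in_hom[OF k projections_in_hom(1)] by (auto simp: hom_iff)
  moreover have "\<delta> \<in> Sub C A"
    using im comp_in_hom[OF k projections_in_hom(1)]
    unfolding is_image_def Sub_def by (simp add: hom_iff)
  ultimately show thesis
    using that k by blast
qed

lemma diagonal_pullback_le:
  assumes rep: "represents c p" and c: "c \<in> hom C T A" and p: "p \<in> Sub C A"
    and k: "k \<in> hom C (dm C k) PAB"
      "\<And>g. sub_le C g k \<longleftrightarrow> sub_le C g Ra \<and> sub_le C (cmp C swap g) Rb"
    and im: "is_image C (cmp C a1 k) \<delta>"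
    and pb_s: "is_pullback C c \<delta> s s'" and pb_n: "is_pullback C c p n n'"
  shows "sub_le C s n"
proof -
  have a1k: "cmp C a1 k \<in> hom C (dm C k) A"
    using comp_in_hom[OF k(1) projections_in_hom(1)] .
  obtain f g where pb_f: "is_pullback C c (cmp C a1 k) f g"
    using pullback_exists[OF c a1k] by blast
  note sq = pullback_in_hom[OF pb_f]
  have f: "f \<in> hom C (dm C f) T" and g: "g \<in> hom C (dm C f) (dm C k)"
    using sq(1,2) c a1k by (simp_all add: hom_iff)
  have kg: "cmp C k g \<in> hom C (dm C f) PAB"
    using comp_in_hom[OF g k(1)] .
  have a1kg: "cmp C a1 (cmp C k g) = cmp C c f"
    using comp_assoc[OF g k(1) projections_in_hom(1)] pullback_commutes[OF pb_f] by simp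
  have "sub_le C (cmp C k g) k"
    using sub_leI[OF k(1) g] .
  then have "sub_le C (cmp C a1 (cmp C k g)) p"
    using represents_iff[OF rep c p kg f a1kg] k(2) by blast
  then have "sub_le C f n"
    using sub_le_pullback_iff[OF pb_n c f] a1kg by simp
  moreover have "mono C n" "cd C n = T"
    using mono_pullback[OF pb_n] p pullback_in_hom(1)[OF pb_n] c
    by (auto simp: Sub_def hom_iff)
  ultimately show ?thesis
    using image_least[OF image_pullback[OF im pb_f pb_s]] f by (simp add: hom_iff)
qed

lemma diagonal_at_point:
  assumes rep: "represents c p" and c: "c \<in> hom C T A" and p: "p \<in> Sub C A"
    and k: "k \<in> hom C (dm C k) PAB"
      "\<And>g. sub_le C g k \<longleftrightarrow> sub_le C g Ra \<and> sub_le C (cmp C swap g) Rb"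
    and im: "is_image C (cmp C a1 k) \<delta>" and \<delta>: "\<delta> \<in> Sub C A"
    and e: "e \<in> hom C Z PAB" "z \<in> hom C Z T" "cmp C a1 e = cmp C c z"
      "sub_le C e Ra" "sub_le C (cmp C a1 e) p"
  shows "sub_le C (cmp C a1 e) \<delta>"
proof -
  have "sub_le C e k"
    using represents_iff[OF rep c p e(1-4)] e(4,5) k(2) by blast
  then have "sub_le C (cmp C a1 e) (cmp C a1 k)"
    using sub_le_comp_left[OF _ k(1) projections_in_hom(1)] by blast
  then show ?thesis
    using sub_le_trans[OF _ image_sub_le[OF im]] Sub_in_hom[OF \<delta>] by (simp add: hom_iff)
qed

lemma le_diagonal_pullback:
  assumes rep: "represents c p" and tot: "total_at c" and c: "c \<in> hom C T A"
    and p: "p \<in> Sub C A"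
    and k: "k \<in> hom C (dm C k) PAB"
      "\<And>g. sub_le C g k \<longleftrightarrow> sub_le C g Ra \<and> sub_le C (cmp C swap g) Rb"
    and im: "is_image C (cmp C a1 k) \<delta>" and \<delta>: "\<delta> \<in> Sub C A"
    and pb_s: "is_pullback C c \<delta> s s'" and pb_n: "is_pullback C c p n n'"
  shows "sub_le C n s"
proof -
  txt \<open>(A3): over a cover f of 1 there is a witness e = (c, y) of Ra(c,y).\<close>
  obtain f m e where cover: "is_image C f m" "f \<in> hom C (dm C f) T" "sub_le C (idt C T) m"
    and e: "e \<in> hom C (dm C f) PAB" "sub_le C e Ra" "cmp C a1 e = cmp C c f"
    using total_at_cover[OF tot c] by blast
  have n: "n \<in> hom C (dm C n) T"
    using pullback_in_hom(1)[OF pb_n] c by (simp add: hom_iff)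
  obtain f' g' where pb_f: "is_pullback C n f f' g'"
    using pullback_exists[OF n cover(2)] by blast
  have f': "f' \<in> hom C (dm C f') (dm C n)" and g': "g' \<in> hom C (dm C f') (dm C f)"
    using pullback_in_hom(1,2)[OF pb_f] by simp_all
  have nf': "cmp C n f' \<in> hom C (dm C f') T"
    using comp_in_hom[OF f' n] .
  define e' where "e' = cmp C e g'"
  have e': "e' \<in> hom C (dm C f') PAB"
    unfolding e'_def using comp_in_hom[OF g' e(1)] .
  have a1e': "cmp C a1 e' = cmp C c (cmp C n f')"
    using comp_assoc[OF g' e(1) projections_in_hom(1)] comp_assoc[OF g' cover(2) c] e(3)
      pullback_commutes[OF pb_f] unfolding e'_def by simp
  have "sub_le C e' Ra"
    unfolding e'_def using sub_le_comp_right[OF e(2)] Sub_in_hom[OF Ra] g' e(1)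
    by (simp add: hom_iff)
  moreover have "sub_le C (cmp C a1 e') p"
  proof -
    have "sub_le C (cmp C c n) p"
      using sub_le_pullback_iff[OF pb_n c n] sub_le_refl n by (simp add: hom_iff)
    moreover have "f' \<in> hom C (dm C f') (dm C (cmp C c n))"
      using f' comp_in_hom[OF n c] by (simp add: hom_iff)
    ultimately show ?thesis
      using sub_le_comp_right Sub_in_hom[OF p] comp_assoc[OF f' n c] a1e'
      by (simp add: hom_iff)
  qed
  ultimately have "sub_le C (cmp C c (cmp C n f')) \<delta>"
    using diagonal_at_point[OF rep c p k im \<delta> e' nf' a1e'] a1e' by simp
  then have "sub_le C (cmp C n f') s"
    using sub_le_pullback_iff[OF pb_s c nf'] by simp
  moreover have "mono C s" "cd C s = cd C n"
    using mono_pullback[OF pb_s] \<delta> pullback_in_hom(1)[OF pb_s] n c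
    by (auto simp: Sub_def hom_iff)
  ultimately show ?thesis
    using sub_le_of_cover[OF cover(1) _ pb_f] cover(2,3) by (simp add: hom_iff)
qed

lemma nat_trans_Sub_fixpoint:
  assumes natt: "nat_trans_Sub C \<tau>" and obA: "A \<in> Ob C"
    and points: "\<forall>p \<in> Sub C A. \<exists>c \<in> hom C T A. represents c p \<and> total_at c"
  shows "\<exists>s \<in> Sub C T. sub_eq C (\<tau> T s) s"
proof -
  obtain k \<delta> where k: "k \<in> hom C (dm C k) PAB"
      "\<And>g. sub_le C g k \<longleftrightarrow> sub_le C g Ra \<and> sub_le C (cmp C swap g) Rb"
    and \<delta>: "is_image C (cmp C a1 k) \<delta>" "\<delta> \<in> Sub C A"
    using diagonal_exists by blast
  define p where "p = \<tau> A \<delta>"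
  have p: "p \<in> Sub C A"
    using natt \<delta>(2) obA unfolding nat_trans_Sub_def p_def by blast
  obtain c where c: "c \<in> hom C T A" "represents c p" "total_at c"
    using points p by blast
  obtain s s' n n' where pb_s: "is_pullback C c \<delta> s s'" and pb_n: "is_pullback C c p n n'"
    using pullback_exists[OF c(1) Sub_in_hom[OF \<delta>(2)]] pullback_exists[OF c(1) Sub_in_hom[OF p]]
    by metis
  have s: "s \<in> Sub C T"
    using mono_pullback[OF pb_s] \<delta>(2) pullback_in_hom(1)[OF pb_s] c(1)
    by (auto simp: Sub_def hom_iff)
  then have "\<tau> T s \<in> Sub C T"
    using natt terminal unfolding nat_trans_Sub_def terminal_def by blast
  moreover have "sub_eq C (\<tau> T s) n"
    using natt c(1) \<delta>(2) pb_s pb_n unfolding nat_trans_Sub_def pb_def p_def by blast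
  moreover have "sub_eq C n s"
    unfolding sub_eq_def
    using diagonal_pullback_le[OF c(2,1) p k \<delta>(1) pb_s pb_n]
      le_diagonal_pullback[OF c(2,3,1) p k \<delta> pb_s pb_n] by blast
  ultimately show ?thesis
    using s sub_eq_trans Sub_in_hom by (meson hom_iff)
qed

end

theorem lemma7:
  fixes C :: "('o, 'a) cat" and \<tau> :: "'o \<Rightarrow> 'a \<Rightarrow> 'a"
    and T A B PAB PBA :: 'o and a1 b1 b2 a2 Ra Rb :: 'a
  assumes reg: "regular_category C"
    and termT: "terminal C T"
    and obA: "A \<in> Ob C" and obB: "B \<in> Ob C"
    and prodAB: "is_product C A B PAB a1 b1"
    and prodBA: "is_product C B A PBA b2 a2"
    and Ra: "Ra \<in> Sub C PAB" and Rb: "Rb \<in> Sub C PBA"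
    and hyp: "\<forall>p \<in> Sub C A. \<exists>c \<in> hom C T A.
       (\<forall>bang t1 t2. bang \<in> hom C PAB T \<and> is_pair C a1 b1 (cmp C c bang) b1 t1
                         \<and> is_pair C b2 a2 b1 a1 t2 \<longrightarrow>
          (\<forall>ra rb pp. pb C t1 Ra ra \<and> pb C t2 Rb rb \<and> pb C a1 p pp \<longrightarrow>
             (\<forall>m1. sub_meet C ra rb m1 \<longrightarrow> sub_le C m1 pp) \<and>
             (\<forall>m2. sub_meet C ra pp m2 \<longrightarrow> sub_le C m2 rb))) \<and>
       (\<forall>bangB u s m. bangB \<in> hom C B T \<and> is_pair C a1 b1 (cmp C c bangB) (idt C B) u
                        \<and> pb C u Ra s \<and> is_image C (cmp C bangB s) m \<longrightarrow>
          sub_le C (idt C T) m)"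
    and natt: "nat_trans_Sub C \<tau>"
  shows "\<exists>s \<in> Sub C T. sub_eq C (\<tau> T s) s"
proof -
  interpret regular_cat C
    using reg by unfold_locales (simp_all add: regular_category_def)
  have proj: "a1 \<in> hom C PAB A" "b1 \<in> hom C PAB B" "b2 \<in> hom C PBA B" "a2 \<in> hom C PBA A"
    using prodAB prodBA unfolding is_product_def by blast+
  obtain swap where swap: "swap \<in> hom C PAB PBA" "cmp C b2 swap = b1" "cmp C a2 swap = a1"
    using product_pair[OF prodBA proj(2,1)] by blast
  interpret relation_pair C T A B PAB PBA a1 b1 b2 a2 Ra Rb swap
    using termT prodAB prodBA Ra Rb swap proj
    by unfold_locales (simp_all add: is_pair_def hom_iff)
  show ?thesis
    using nat_trans_Sub_fixpoint[OF natt obA] hyp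
    unfolding represents_def total_at_def by blast
qed

end
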